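(* Let $\mathcal{D}$ be the arena of a $p$-periodic graph on $V$ and $k\ge 1$. Then $\mathcal{D}$ is $k$-copwin if and only if the maximum augmented $k$-arena $\mathcal{A}^k_{\max}$ contains a $k$-anchored $k$-star, i.e., there exist $t\in\mathbb{Z}_p$ and $U\in[V]^k$ such that $\Gamma_t(U,\mathcal{A}^k_{\max})=V$ and $(t,U)$ is $k$-anchored.
   Context: Let $V$ be a finite set and $p\ge 1$ an integer; $[t]_p$ denotes $t\bmod p$. A $p$-periodic graph is the sequence of directed graphs $G_t=(V,E_{[t]_p})$ with $E_0,\dots,E_{p-1}\subseteq V\times V$ (self-loops allowed), each sinkless. Its arena $\mathcal{D}$ is the directed graph on $\mathbb{Z}_p\times V$ with $((i,u),([i+1]_p,v))\in E(\mathcal{D})$ iff $(u,v)\in E_i$; $\Gamma_t(u,\mathcal{D})=\{v:((t,u),([t+1]_p,v))\in E(\mathcal{D})\}$. $[V]^k$ denotes the set of multisets of $k$ elements of $V$. Game with $k$ cops: first the cops choose a multiset $C\in[V]^k$ of positions, then the robber chooses $r\in V$. In each round $t$, with cops at $C=\langle c_1,\dots,c_k\rangle$ and robber at $r$, every cop $j$ must move to some $c_j'\in\Gamma_{[t]_p}(c_j,\mathcal{D})$; if some $c_j'=r$ the cops win; otherwise the robber must move to some $r'\in\Gamma_{[t]_p}(r,\mathcal{D})$ and the next round starts with cops at $\langle c_1',\dots,c_k'\rangle$ and robber at $r'$. A configuration $(t,C,r)$ ($t\in\mathbb{Z}_p$) is the state at the start of a round with index $\equiv t\pmod p$, cops to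 move; it is $k$-copwin if from it the cops can force capture in finitely many rounds against every robber strategy. $\mathcal{D}$ is $k$-copwin if there is $C\in[V]^k$ with $(0,C,r)$ $k$-copwin for all $r\in V$. A $k$-hyperedge is a triple $(t,X,y)$ with $t\in\mathbb{Z}_p$, $X\in[V]^k$, $y\in V$. The $k$-arena $\mathcal{D}^k$ is the set of $k$-hyperedges $(t,X,y)$ with $((t,x),([t+1]_p,y))\in E(\mathcal{D})$ for some $x\in X$. An augmented $k$-arena is a set $\mathcal{A}^k\supseteq\mathcal{D}^k$ of $k$-hyperedges such that each $(t,X,y)\in\mathcal{A}^k$ is a $k$-copwin configuration; $\mathcal{A}^k_{\max}$ is the maximum one (union of all augmented $k$-arenas). For a set $\mathcal{A}^k$ of $k$-hyperedges, $\Gamma_t(X,\mathcal{A}^k)=\{y\in V:(t,X,y)\in\mathcal{A}^k\}$. A pair $(t,U)$ with $U\in[V]^k$ is a $k$-star in $\mathcal{A}^k$ if $\Gamma_t(U,\mathcal{A}^k)=V$. It is $k$-anchored if, writing $U=\langle u_1,\dots,u_k\rangle$, there are an integer $T\ge 0$ with $T\equiv t\pmod p$ and $x_1,\dots,x_k\in V$ such that for each $j$ there is a directed walk of length exactly $T$ in $\mathcal{D}$ from $(0,x_j)$ to $(t,u_j)$. *)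

theory Defs
  imports Main "HOL-Library.Multiset"
begin

text \<open>A p-periodic graph on the vertex set V: edge sets E 0, ..., E (p-1),
  each contained in V x V and sinkless. Time indices in Z_p are naturals t < p.\<close>
definition periodic_graph :: "'v set \<Rightarrow> nat \<Rightarrow> (nat \<Rightarrow> ('v \<times> 'v) set) \<Rightarrow> bool" where
  "periodic_graph V p E \<longleftrightarrow> finite V \<and> p \<ge> 1 \<and>
     (\<forall>i<p. E i \<subseteq> V \<times> V) \<and> (\<forall>i<p. \<forall>u\<in>V. \<exists>v. (u, v) \<in> E i)"

definition arena :: "nat \<Rightarrow> (nat \<Rightarrow> ('v \<times> 'v) set) \<Rightarrow> ((nat \<times> 'v) \<times> (nat \<times> 'v)) set" where
  "arena p E = {((i, u), ((i + 1) mod p, v)) | i u v. i < p \<and> (u, v) \<in> E i}"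

definition Gamma :: "nat \<Rightarrow> (nat \<Rightarrow> ('v \<times> 'v) set) \<Rightarrow> nat \<Rightarrow> 'v \<Rightarrow> 'v set" where
  "Gamma p E t u = {v. ((t, u), ((t + 1) mod p, v)) \<in> arena p E}"

definition cop_move :: "nat \<Rightarrow> (nat \<Rightarrow> ('v \<times> 'v) set) \<Rightarrow> nat \<Rightarrow> 'v multiset \<Rightarrow> 'v multiset \<Rightarrow> bool" where
  "cop_move p E t C C' \<longleftrightarrow> rel_mset (\<lambda>c c'. c' \<in> Gamma p E t c) C C'"

text \<open>Configurations from which the cops can force capture in finitely many rounds
  (least fixed point / attractor).\<close>
inductive copwin :: "nat \<Rightarrow> (nat \<Rightarrow> ('v \<times> 'v) set) \<Rightarrow> nat \<Rightarrow> 'v multiset \<Rightarrow> 'v \<Rightarrow> bool"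
  for p E where
  step: "cop_move p E t C C' \<Longrightarrow>
         (r \<in># C' \<or> (\<forall>r' \<in> Gamma p E t r. copwin p E ((t + 1) mod p) C' r'))
         \<Longrightarrow> copwin p E t C r"

definition k_copwin :: "'v set \<Rightarrow> nat \<Rightarrow> (nat \<Rightarrow> ('v \<times> 'v) set) \<Rightarrow> nat \<Rightarrow> bool" where
  "k_copwin V p E k \<longleftrightarrow>
     (\<exists>C. size C = k \<and> set_mset C \<subseteq> V \<and> (\<forall>r\<in>V. copwin p E 0 C r))"

definition hyperedges :: "'v set \<Rightarrow> nat \<Rightarrow> nat \<Rightarrow> (nat \<times> 'v multiset \<times> 'v) set" where
  "hyperedges V p k = {(t, X, y). t < p \<and> size X = k \<and> set_mset X \<subseteq> V \<and> y \<in> V}"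

definition k_arena :: "'v set \<Rightarrow> nat \<Rightarrow> (nat \<Rightarrow> ('v \<times> 'v) set) \<Rightarrow> nat \<Rightarrow> (nat \<times> 'v multiset \<times> 'v) set" where
  "k_arena V p E k = {(t, X, y) \<in> hyperedges V p k.
       \<exists>x \<in># X. ((t, x), ((t + 1) mod p, y)) \<in> arena p E}"

definition augmented_k_arena ::
  "'v set \<Rightarrow> nat \<Rightarrow> (nat \<Rightarrow> ('v \<times> 'v) set) \<Rightarrow> nat \<Rightarrow> (nat \<times> 'v multiset \<times> 'v) set \<Rightarrow> bool" where
  "augmented_k_arena V p E k A \<longleftrightarrow>
     k_arena V p E k \<subseteq> A \<and> A \<subseteq> hyperedges V p k \<and>
     (\<forall>(t, X, y) \<in> A. copwin p E t X y)"

definition A_max :: "'v set \<Rightarrow> nat \<Rightarrow> (nat \<Rightarrow> ('v \<times> 'v) set) \<Rightarrow> nat \<Rightarrow> (nat \<times> 'v multiset \<times> 'v) set" where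
  "A_max V p E k = \<Union> {A. augmented_k_arena V p E k A}"

definition Gamma_hyp :: "nat \<Rightarrow> 'v multiset \<Rightarrow> (nat \<times> 'v multiset \<times> 'v) set \<Rightarrow> 'v set" where
  "Gamma_hyp t X A = {y. (t, X, y) \<in> A}"

definition is_k_star :: "'v set \<Rightarrow> nat \<Rightarrow> nat \<Rightarrow> (nat \<times> 'v multiset \<times> 'v) set \<Rightarrow> nat \<Rightarrow> 'v multiset \<Rightarrow> bool" where
  "is_k_star V p k A t U \<longleftrightarrow> t < p \<and> size U = k \<and> set_mset U \<subseteq> V \<and> Gamma_hyp t U A = V"

definition arena_walk :: "nat \<Rightarrow> (nat \<Rightarrow> ('v \<times> 'v) set) \<Rightarrow> nat \<Rightarrow> nat \<times> 'v \<Rightarrow> nat \<times> 'v \<Rightarrow> bool" where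
  "arena_walk p E T a b \<longleftrightarrow>
     (\<exists>w :: nat \<Rightarrow> nat \<times> 'v. w 0 = a \<and> w T = b \<and> (\<forall>i<T. (w i, w (Suc i)) \<in> arena p E))"

definition k_anchored :: "'v set \<Rightarrow> nat \<Rightarrow> (nat \<Rightarrow> ('v \<times> 'v) set) \<Rightarrow> nat \<Rightarrow> 'v multiset \<Rightarrow> bool" where
  "k_anchored V p E t U \<longleftrightarrow>
     (\<exists>T. T mod p = t \<and> (\<forall>u \<in># U. \<exists>x \<in> V. arena_walk p E T (0, x) (t, u)))"

end

theory Submission
  imports Defs
begin

text \<open>\<open>A_max\<close> is exactly the set of winning configurations, since every hyperedge of
  the \<open>k\<close>-arena is won in one round. Hence a winning start \<open>C\<close> is a star \<open>(0, C)\<close>,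
  anchored by walks of length \<open>0\<close>. Conversely, a star \<open>(t, U)\<close> wins at time \<open>t\<close> against
  every robber; anchoring walks of a common length \<open>T \<equiv> t (mod p)\<close> let the cops start at
  the walks' origins at time \<open>0\<close> and walk in lockstep to \<open>U\<close>, and since the robber never
  leaves \<open>V\<close> this winning property propagates backwards along the walks to time \<open>0\<close>.\<close>

lemma Gamma_iff: "v \<in> Gamma p E t u \<longleftrightarrow> t < p \<and> (u, v) \<in> E t"
  unfolding Gamma_def arena_def by auto

lemma Gamma_subset:
  assumes "periodic_graph V p E"
  shows "Gamma p E t u \<subseteq> V"
  using assms unfolding periodic_graph_def by (force simp: Gamma_iff)

lemma Gamma_nonempty:
  assumes "periodic_graph V p E" and "t < p" and "u \<in> V"
  obtains v where "v \<in> Gamma p E t u"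
proof -
  from assms obtain v where "(u, v) \<in> E t" unfolding periodic_graph_def by blast
  with \<open>t < p\<close> show thesis by (intro that) (simp add: Gamma_iff)
qed

lemma arena_walk_time:
  assumes "fst (w 0) = 0" and "\<forall>i<T. (w i, w (Suc i)) \<in> arena p E" and "i \<le> T"
  shows "fst (w i) = i mod p"
  using assms(3)
proof (induction i)
  case 0
  then show ?case using assms(1) by simp
next
  case (Suc i)
  then have "fst (w i) = i mod p" and "(w i, w (Suc i)) \<in> arena p E"
    using assms(2) by simp_all
  then show ?case unfolding arena_def by (auto simp: mod_Suc_eq)
qed

lemma arena_walk_Gamma:
  assumes "fst (w 0) = 0" and "\<forall>i<T. (w i, w (Suc i)) \<in> arena p E" and "j < T"
  shows "snd (w (Suc j)) \<in> Gamma p E (j mod p) (snd (w j))"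
proof -
  have "fst (w j) = j mod p" "fst (w (Suc j)) = (j mod p + 1) mod p"
    using arena_walk_time[OF assms(1,2)] assms(3) by (simp_all add: mod_Suc_eq)
  moreover have "(w j, w (Suc j)) \<in> arena p E" using assms(2,3) by simp
  ultimately have "((j mod p, snd (w j)), ((j mod p + 1) mod p, snd (w (Suc j)))) \<in> arena p E"
    by (metis prod.collapse)
  then show ?thesis unfolding Gamma_def by simp
qed

lemma cop_move_image_mset:
  assumes "\<forall>u\<in>#U. g u \<in> Gamma p E t (f u)"
  shows "cop_move p E t (image_mset f U) (image_mset g U)"
  using assms unfolding cop_move_def
  by (auto simp: multiset.rel_map intro: multiset.rel_refl_strong)

lemma copwin_if_k_arena:
  assumes pg: "periodic_graph V p E" and "(t, X, y) \<in> k_arena V p E k"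
  shows "copwin p E t X y"
proof -
  from assms(2) obtain x where "x \<in># X" and "y \<in> Gamma p E t x"
    and t: "t < p" and XV: "set_mset X \<subseteq> V"
    unfolding k_arena_def hyperedges_def Gamma_def by auto
  then obtain X' where X: "X = add_mset x X'" by (metis multi_member_split)
  \<comment> \<open>the cop at \<open>x\<close> captures the robber at \<open>y\<close>; the other cops move anywhere\<close>
  define f where "f c = (SOME v. v \<in> Gamma p E t c)" for c
  have "\<forall>c\<in>#X'. f c \<in> Gamma p E t c"
  proof
    fix c assume "c \<in># X'"
    then have "c \<in> V" using XV X by auto
    then obtain v where "v \<in> Gamma p E t c" by (rule Gamma_nonempty[OF pg t])
    then show "f c \<in> Gamma p E t c" unfolding f_def by (rule someI)
  qed
  then have "cop_move p E t X' (image_mset f X')"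
    using cop_move_image_mset[of X' f p E t id] by simp
  with \<open>y \<in> Gamma p E t x\<close> have "cop_move p E t X (add_mset y (image_mset f X'))"
    unfolding cop_move_def X by (simp add: rel_mset_Plus)
  then show ?thesis by (rule copwin.step) simp
qed

lemma A_max_iff:
  assumes "periodic_graph V p E"
  shows "(t, X, y) \<in> A_max V p E k \<longleftrightarrow> (t, X, y) \<in> hyperedges V p k \<and> copwin p E t X y"
proof
  assume "(t, X, y) \<in> A_max V p E k"
  then show "(t, X, y) \<in> hyperedges V p k \<and> copwin p E t X y"
    unfolding A_max_def augmented_k_arena_def by blast
next
  let ?W = "{(t, X, y) \<in> hyperedges V p k. copwin p E t X y}"
  have "augmented_k_arena V p E k ?W"
    using copwin_if_k_arena[OF assms]
    unfolding augmented_k_arena_def by (fastforce simp: k_arena_def)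
  then show "(t, X, y) \<in> hyperedges V p k \<and> copwin p E t X y \<Longrightarrow> (t, X, y) \<in> A_max V p E k"
    unfolding A_max_def by blast
qed

lemma is_k_star_A_max_iff:
  assumes "periodic_graph V p E"
  shows "is_k_star V p k (A_max V p E k) t U \<longleftrightarrow>
    t < p \<and> size U = k \<and> set_mset U \<subseteq> V \<and> (\<forall>r\<in>V. copwin p E t U r)"
  using A_max_iff[OF assms] unfolding is_k_star_def Gamma_hyp_def hyperedges_def by auto

lemma copwin_all_if_cop_move:
  assumes "periodic_graph V p E" and "cop_move p E t C C'"
    and "\<forall>r\<in>V. copwin p E ((t + 1) mod p) C' r"
  shows "\<forall>r\<in>V. copwin p E t C r"
proof
  fix r assume "r \<in> V"
  show "copwin p E t C r"
    using assms(3) Gamma_subset[OF assms(1)] by (intro copwin.step[OF assms(2)]) blast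
qed

lemma k_anchored_0:
  assumes "set_mset U \<subseteq> V"
  shows "k_anchored V p E 0 U"
proof -
  have "arena_walk p E 0 (0, u) (0, u)" for u
    unfolding arena_walk_def by (rule exI[of _ "\<lambda>_. (0, u)"]) simp
  with assms have "\<forall>u\<in>#U. \<exists>x\<in>V. arena_walk p E 0 (0, x) (0, u)" by blast
  then show ?thesis unfolding k_anchored_def by (intro exI[of _ 0]) simp
qed

lemma copwin_walk_sources:
  assumes pg: "periodic_graph V p E"
    and W: "\<forall>u\<in>#U. fst (W u 0) = 0 \<and> W u T = (T mod p, u) \<and>
                     (\<forall>i<T. (W u i, W u (Suc i)) \<in> arena p E)"
    and win: "\<forall>r\<in>V. copwin p E (T mod p) U r"
  shows "\<forall>r\<in>V. copwin p E 0 (image_mset (\<lambda>u. snd (W u 0)) U) r"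
proof -
  define Cs where "Cs j = image_mset (\<lambda>u. snd (W u j)) U" for j
  have "\<forall>r\<in>V. copwin p E (j mod p) (Cs j) r" if "j \<le> T" for j
    using that
  proof (induction "T - j" arbitrary: j)
    case 0
    then have "j = T" by arith
    then have "Cs j = U"
      using W unfolding Cs_def by (simp add: multiset.map_ident_strong)
    with \<open>j = T\<close> win show ?case by simp
  next
    case (Suc n)
    then have "j < T" by arith
    with Suc have "\<forall>r\<in>V. copwin p E (Suc j mod p) (Cs (Suc j)) r" by simp
    moreover have "cop_move p E (j mod p) (Cs j) (Cs (Suc j))"
      unfolding Cs_def using W \<open>j < T\<close>
      by (intro cop_move_image_mset ballI arena_walk_Gamma[where T = T]) auto
    ultimately show ?case
      using copwin_all_if_cop_move[OF pg] by (simp add: mod_Suc_eq)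
  qed
  from this[of 0] show ?thesis unfolding Cs_def by simp
qed

lemma k_copwin_if_anchored_star:
  assumes pg: "periodic_graph V p E"
    and "is_k_star V p k (A_max V p E k) t U" and "k_anchored V p E t U"
  shows "k_copwin V p E k"
proof -
  from assms(2) have U: "size U = k" "set_mset U \<subseteq> V" and win: "\<forall>r\<in>V. copwin p E t U r"
    unfolding is_k_star_A_max_iff[OF pg] by auto
  from assms(3) obtain T where T: "T mod p = t"
    and walks: "\<forall>u\<in>#U. \<exists>x\<in>V. arena_walk p E T (0, x) (t, u)"
    unfolding k_anchored_def by auto
  have "\<exists>w. snd (w 0) \<in> V \<and> fst (w 0) = 0 \<and> w T = (t, u) \<and>
            (\<forall>i<T. (w i, w (Suc i)) \<in> arena p E)" if "u \<in># U" for u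
    using walks that unfolding arena_walk_def by force
  then obtain W where W: "\<forall>u\<in>#U. snd (W u 0) \<in> V \<and> fst (W u 0) = 0 \<and> W u T = (t, u) \<and>
                           (\<forall>i<T. (W u i, W u (Suc i)) \<in> arena p E)"
    by metis
  let ?C = "image_mset (\<lambda>u. snd (W u 0)) U"
  have "\<forall>r\<in>V. copwin p E 0 ?C r"
    using copwin_walk_sources[OF pg, of U W T] W win T by simp
  moreover have "size ?C = k" "set_mset ?C \<subseteq> V" using U W by auto
  ultimately show ?thesis unfolding k_copwin_def by blast
qed

theorem theorem6:
  fixes V :: "'v set" and p k :: nat and E :: "nat \<Rightarrow> ('v \<times> 'v) set"
  assumes "periodic_graph V p E" and "k \<ge> 1"
  shows "k_copwin V p E k \<longleftrightarrow>
    (\<exists>t U. is_k_star V p k (A_max V p E k) t U \<and> k_anchored V p E t U)"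
proof
  assume "k_copwin V p E k"
  then obtain C where "size C = k" "set_mset C \<subseteq> V" "\<forall>r\<in>V. copwin p E 0 C r"
    unfolding k_copwin_def by auto
  moreover have "0 < p" using assms(1) unfolding periodic_graph_def by auto
  ultimately have "is_k_star V p k (A_max V p E k) 0 C" and "k_anchored V p E 0 C"
    using is_k_star_A_max_iff[OF assms(1)] k_anchored_0 by auto
  then show "\<exists>t U. is_k_star V p k (A_max V p E k) t U \<and> k_anchored V p E t U" by blast
next
  assume "\<exists>t U. is_k_star V p k (A_max V p E k) t U \<and> k_anchored V p E t U"
  then show "k_copwin V p E k" using k_copwin_if_anchored_star[OF assms(1)] by blast
qed

end
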